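(* No matching algorithm for school choice with feature-based uncertain preferences satisfies incentive compatibility with adventurism (IC-A) unless it always outputs the same result.
   Context: An instance consists of: a set $N$ of students; a set $M$ of $m$ colleges, each college $c$ with positive integer capacity $x_c$ and strict preference $\succ_c$ over $N$; a finite set $F$ of features; for each student $s$ and feature $f$ a utility function $u_s^f:M\to[0,1]$; for each student $s$ a probability distribution $\mu_s$ over weight vectors $w_s=(w_s^f)_{f\in F}$ with $w_s^f\ge0$, $\sum_f w_s^f=1$, independent across students. For realized $w_s$, $c\succ_s^{w_s}c'$ iff $\sum_f w_s^fu_s^f(c)>\sum_f w_s^fu_s^f(c')$; being unmatched ($\mathsf{null}$) is ranked below any college. A matching algorithm maps each instance to a matching (each student gets at most one college, each college $c$ at most $x_c$ students). Each student $s$ privately knows $(u_s,\mu_s)=(\{u_s^f\}_{f\in F},\mu_s)$ and may report any $(u_s',\mu_s')$. Let $\pi(s)$ be the college assigned to $s$ when she reports truthfully and $\pi'(s)$ the one assigned under a misreport (everything else fixed). The algorithm is IC-A if for every instance, student $s$, and misreport, $\Pr[\pi'(s)\succ_s^{w_s}\pi(s)]>0$ never occurs, where the probability is over $s$'s true weights $w_s\sim\mu_s$ and uses her true utilities. *)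

theory Defs
  imports "HOL-Probability.Probability"
begin

text \<open>Student s's report consists of utilities (util I s f c = u_s^f(c)) and a
  probability distribution (wdist I s) over weight vectors w : 'f => real,
  living on the product sigma-algebra of borel over F.\<close>

record ('s, 'c, 'f) sinst =
  students :: "'s set"
  colleges :: "'c set"
  cap :: "'c \<Rightarrow> nat"
  cpref :: "'c \<Rightarrow> 's rel"          \<comment> \<open>(a,b) \<in> cpref c  means  a \<succ>_c b\<close>
  util :: "'s \<Rightarrow> 'f \<Rightarrow> 'c \<Rightarrow> real"
  wdist :: "'s \<Rightarrow> ('f \<Rightarrow> real) measure"

definition weight_space :: "'f set \<Rightarrow> ('f \<Rightarrow> real) measure" where
  "weight_space F = (\<Pi>\<^sub>M f\<in>F. (borel :: real measure))"

definition is_weight :: "'f set \<Rightarrow> ('f \<Rightarrow> real) \<Rightarrow> bool" where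
  "is_weight F w \<longleftrightarrow> (\<forall>f\<in>F. w f \<ge> 0) \<and> (\<Sum>f\<in>F. w f) = 1"

definition valid_wdist :: "'f set \<Rightarrow> ('f \<Rightarrow> real) measure \<Rightarrow> bool" where
  "valid_wdist F \<mu> \<longleftrightarrow> prob_space \<mu> \<and> sets \<mu> = sets (weight_space F)
     \<and> (AE w in \<mu>. is_weight F w)"

definition valid_report :: "'f set \<Rightarrow> 'c set \<Rightarrow> ('f \<Rightarrow> 'c \<Rightarrow> real)
     \<Rightarrow> ('f \<Rightarrow> real) measure \<Rightarrow> bool" where
  "valid_report F M u \<mu> \<longleftrightarrow> (\<forall>f\<in>F. \<forall>c\<in>M. 0 \<le> u f c \<and> u f c \<le> 1) \<and> valid_wdist F \<mu>"

definition valid_instance :: "'f set \<Rightarrow> ('s, 'c, 'f) sinst \<Rightarrow> bool" where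
  "valid_instance F I \<longleftrightarrow>
     finite (students I) \<and> finite (colleges I) \<and>
     (\<forall>c\<in>colleges I. cap I c > 0) \<and>
     (\<forall>c\<in>colleges I. cpref I c \<subseteq> students I \<times> students I
                       \<and> strict_linear_order_on (students I) (cpref I c)) \<and>
     (\<forall>s\<in>students I. valid_report F (colleges I) (util I s) (wdist I s))"

type_synonym ('s, 'c) matching = "'s \<Rightarrow> 'c option"

definition is_matching :: "('s, 'c, 'f) sinst \<Rightarrow> ('s, 'c) matching \<Rightarrow> bool" where
  "is_matching I \<pi> \<longleftrightarrow>
     (\<forall>s c. \<pi> s = Some c \<longrightarrow> s \<in> students I \<and> c \<in> colleges I) \<and>
     (\<forall>c\<in>colleges I. card {s \<in> students I. \<pi> s = Some c} \<le> cap I c)"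

definition matching_algorithm :: "'f set \<Rightarrow> (('s, 'c, 'f) sinst \<Rightarrow> ('s, 'c) matching) \<Rightarrow> bool" where
  "matching_algorithm F A \<longleftrightarrow> (\<forall>I. valid_instance F I \<longrightarrow> is_matching I (A I))"

definition wutil :: "'f set \<Rightarrow> ('f \<Rightarrow> 'c \<Rightarrow> real) \<Rightarrow> ('f \<Rightarrow> real) \<Rightarrow> 'c \<Rightarrow> real" where
  "wutil F u w c = (\<Sum>f\<in>F. w f * u f c)"

definition strictly_prefers :: "'f set \<Rightarrow> ('f \<Rightarrow> 'c \<Rightarrow> real) \<Rightarrow> ('f \<Rightarrow> real)
     \<Rightarrow> 'c option \<Rightarrow> 'c option \<Rightarrow> bool" where
  "strictly_prefers F u w x y =
     (case x of
        None \<Rightarrow> False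
      | Some c \<Rightarrow> (case y of None \<Rightarrow> True | Some c' \<Rightarrow> wutil F u w c > wutil F u w c'))"

definition misreport :: "('s, 'c, 'f) sinst \<Rightarrow> 's \<Rightarrow> ('f \<Rightarrow> 'c \<Rightarrow> real)
     \<Rightarrow> ('f \<Rightarrow> real) measure \<Rightarrow> ('s, 'c, 'f) sinst" where
  "misreport I s u' \<mu>' = I\<lparr>util := (util I)(s := u'), wdist := (wdist I)(s := \<mu>')\<rparr>"

definition IC_A :: "'f set \<Rightarrow> (('s, 'c, 'f) sinst \<Rightarrow> ('s, 'c) matching) \<Rightarrow> bool" where
  "IC_A F A \<longleftrightarrow>
     (\<forall>I. valid_instance F I \<longrightarrow>
       (\<forall>s\<in>students I. \<forall>u' \<mu>'. valid_report F (colleges I) u' \<mu>' \<longrightarrow>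
          \<not> (measure (wdist I s)
                {w \<in> space (wdist I s).
                   strictly_prefers F (util I s) w (A (misreport I s u' \<mu>') s) (A I s)} > 0)))"

end

theory Submission
  imports Defs
begin

text \<open>Fix a student and regard her assigned college as a function of her report. Applying IC-A
  with one report as her true type and another as the misreport shows that the second outcome is
  almost surely not strictly better than the first. Since any college beats being unmatched, either
  every report leaves her unmatched or none does. If two reports yielded different colleges c and d,
  consider the adventurous type with two features, one valuing only c and the other only d, whose
  weight falls entirely on either feature with probability 1/2 each: its outcome must be c, since
  otherwise misreporting towards c wins with probability 1/2, and for the same reason it must be d.\<close>

definition two_point :: "'a measure \<Rightarrow> 'a \<Rightarrow> 'a \<Rightarrow> 'a measure" where
  "two_point M a b = distr (measure_pmf (bernoulli_pmf (1/2))) M (\<lambda>t. if t then a else b)"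

lemma
  assumes "a \<in> space M" "b \<in> space M"
  shows prob_space_two_point: "prob_space (two_point M a b)"
    and sets_two_point: "sets (two_point M a b) = sets M"
    and space_two_point: "space (two_point M a b) = space M"
    and AE_two_point: "{x \<in> space M. P x} \<in> sets M \<Longrightarrow> P a \<Longrightarrow> P b \<Longrightarrow> AE x in two_point M a b. P x"
    and measure_two_point_ge: "S \<in> sets M \<Longrightarrow> a \<in> S \<or> b \<in> S \<Longrightarrow> measure (two_point M a b) S \<ge> 1/2"
proof -
  let ?g = "\<lambda>t. if t then a else b"
  have g: "?g \<in> measurable (measure_pmf (bernoulli_pmf (1/2))) M"
    using assms by auto
  show "prob_space (two_point M a b)"
    unfolding two_point_def by (rule measure_pmf.prob_space_distr[OF g])
  show "sets (two_point M a b) = sets M" "space (two_point M a b) = space M"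
    by (simp_all add: two_point_def)
  show "AE x in two_point M a b. P x" if "{x \<in> space M. P x} \<in> sets M" "P a" "P b"
    unfolding two_point_def by (subst AE_distr_iff[OF g that(1)]) (simp add: that)
  show "measure (two_point M a b) S \<ge> 1/2" if S: "S \<in> sets M" and ab: "a \<in> S \<or> b \<in> S"
  proof -
    obtain t where t: "t \<in> ?g -` S"
      using ab by (metis vimageI2)
    have "1/2 = measure_pmf.prob (bernoulli_pmf (1/2)) {t}"
      by (simp add: measure_pmf_single)
    also have "\<dots> \<le> measure_pmf.prob (bernoulli_pmf (1/2)) (?g -` S)"
      using t by (intro measure_pmf.finite_measure_mono) auto
    also have "\<dots> = measure (two_point M a b) S"
      unfolding two_point_def by (simp add: measure_distr[OF g S])
    finally show ?thesis .
  qed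
qed

lemma borel_measurable_wutil [measurable]:
  "(\<lambda>w. wutil F u w c) \<in> borel_measurable (weight_space F)"
  unfolding wutil_def weight_space_def by measurable

lemma sets_is_weight: "finite F \<Longrightarrow> {w \<in> space (weight_space F). is_weight F w} \<in> sets (weight_space F)"
  unfolding is_weight_def weight_space_def by measurable

definition unit_weight :: "'f set \<Rightarrow> 'f \<Rightarrow> 'f \<Rightarrow> real" where
  "unit_weight F g = restrict (\<lambda>f. if f = g then 1 else 0) F"

lemma unit_weight_in_space: "unit_weight F g \<in> space (weight_space F)"
  by (simp add: unit_weight_def weight_space_def space_PiM)

lemma is_weight_unit_weight: "finite F \<Longrightarrow> g \<in> F \<Longrightarrow> is_weight F (unit_weight F g)"
  by (simp add: is_weight_def unit_weight_def)

lemma wutil_unit_weight: "finite F \<Longrightarrow> g \<in> F \<Longrightarrow> wutil F u (unit_weight F g) c = u g c"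
proof -
  assume "finite F" "g \<in> F"
  have "wutil F u (unit_weight F g) c = (\<Sum>f\<in>F. if f = g then u g c else 0)"
    unfolding wutil_def unit_weight_def by (rule sum.cong) auto
  with \<open>finite F\<close> \<open>g \<in> F\<close> show ?thesis
    by simp
qed

lemma valid_wdist_two_point_unit_weight:
  assumes "finite F" "g \<in> F" "h \<in> F"
  shows "valid_wdist F (two_point (weight_space F) (unit_weight F g) (unit_weight F h))"
  using assms
  by (simp add: valid_wdist_def prob_space_two_point sets_two_point AE_two_point
      unit_weight_in_space sets_is_weight is_weight_unit_weight)

lemma misreport_simps [simp]:
  "students (misreport I s u \<mu>) = students I"
  "colleges (misreport I s u \<mu>) = colleges I"
  "cap (misreport I s u \<mu>) = cap I"
  "cpref (misreport I s u \<mu>) = cpref I"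
  "util (misreport I s u \<mu>) = (util I)(s := u)"
  "wdist (misreport I s u \<mu>) = (wdist I)(s := \<mu>)"
  "misreport (misreport I s u \<mu>) s u' \<mu>' = misreport I s u' \<mu>'"
  by (simp_all add: misreport_def)

lemma misreport_self: "misreport I s (util I s) (wdist I s) = I"
  by (simp add: misreport_def)

lemma valid_instance_misreport:
  "valid_instance F I \<Longrightarrow> valid_report F (colleges I) u \<mu> \<Longrightarrow> valid_instance F (misreport I s u \<mu>)"
  unfolding valid_instance_def by auto

lemma IC_AD:
  assumes "IC_A F A" "valid_instance F I" "s \<in> students I" "valid_report F (colleges I) u' \<mu>'"
  shows "\<not> measure (wdist I s) {w \<in> space (wdist I s).
           strictly_prefers F (util I s) w (A (misreport I s u' \<mu>') s) (A I s)} > 0"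
  using assms unfolding IC_A_def by blast

lemma IC_A_between_reports:
  assumes "IC_A F A" "valid_instance F I" "s \<in> students I"
    and "valid_report F (colleges I) u \<mu>" "valid_report F (colleges I) u' \<mu>'"
  shows "\<not> measure \<mu> {w \<in> space \<mu>.
           strictly_prefers F u w (A (misreport I s u' \<mu>') s) (A (misreport I s u \<mu>) s)} > 0"
proof -
  have "valid_instance F (misreport I s u \<mu>)"
    using assms(2,4) by (rule valid_instance_misreport)
  from IC_AD[OF assms(1) this, of s u' \<mu>'] assms(3,5) show ?thesis
    by simp
qed

lemma IC_A_matched_if_matched_under_some_report:
  assumes "IC_A F A" "valid_instance F I" "s \<in> students I"
    and "valid_report F (colleges I) u \<mu>" "valid_report F (colleges I) u' \<mu>'"
    and "A (misreport I s u' \<mu>') s \<noteq> None"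
  shows "A (misreport I s u \<mu>) s \<noteq> None"
proof
  assume "A (misreport I s u \<mu>) s = None"
  with assms(6) have "{w \<in> space \<mu>.
      strictly_prefers F u w (A (misreport I s u' \<mu>') s) (A (misreport I s u \<mu>) s)} = space \<mu>"
    by (auto simp: strictly_prefers_def)
  moreover have "measure \<mu> (space \<mu>) = 1"
    using assms(4) by (simp add: valid_report_def valid_wdist_def prob_space.prob_space)
  ultimately show False
    using IC_A_between_reports[OF assms(1-5)] by simp
qed

lemma IC_A_assigns_college_preferred_to_all:
  assumes "IC_A F A" "valid_instance F I" "s \<in> students I"
    and "valid_report F (colleges I) u \<mu>" "valid_report F (colleges I) u' \<mu>'"
    and "A (misreport I s u' \<mu>') s = Some c"
    and preferred: "\<And>d. d \<noteq> c \<Longrightarrow> measure \<mu> {w \<in> space \<mu>. wutil F u w d < wutil F u w c} > 0"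
  shows "A (misreport I s u \<mu>) s = Some c"
proof (rule ccontr)
  assume "A (misreport I s u \<mu>) s \<noteq> Some c"
  moreover have "A (misreport I s u \<mu>) s \<noteq> None"
    using IC_A_matched_if_matched_under_some_report[OF assms(1-5)] assms(6) by simp
  ultimately obtain d where d: "d \<noteq> c" "A (misreport I s u \<mu>) s = Some d"
    by auto
  have "{w \<in> space \<mu>. strictly_prefers F u w (A (misreport I s u' \<mu>') s) (A (misreport I s u \<mu>) s)}
      = {w \<in> space \<mu>. wutil F u w d < wutil F u w c}"
    using assms(6) d(2) by (simp add: strictly_prefers_def)
  then show False
    using IC_A_between_reports[OF assms(1-5)] preferred[OF d(1)] by simp
qed

lemma IC_A_outcome_independent_of_report:
  assumes fin: "finite F" and card: "card F \<ge> 2" and ic: "IC_A F A"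
    and I: "valid_instance F I" "s \<in> students I"
    and r1: "valid_report F (colleges I) u1 \<mu>1" and r2: "valid_report F (colleges I) u2 \<mu>2"
  shows "A (misreport I s u1 \<mu>1) s = A (misreport I s u2 \<mu>2) s"
proof (cases "A (misreport I s u1 \<mu>1) s")
  case None
  then show ?thesis
    using IC_A_matched_if_matched_under_some_report[OF ic I r1 r2] by force
next
  case (Some c)
  then obtain d where d: "A (misreport I s u2 \<mu>2) s = Some d"
    using IC_A_matched_if_matched_under_some_report[OF ic I r2 r1] by auto
  obtain f1 f2 where f: "f1 \<in> F" "f2 \<in> F" "f1 \<noteq> f2"
    using card fin by (metis card_le_Suc0_iff_eq not_less_eq_eq numeral_2_eq_2)
  define e1 where "e1 = unit_weight F f1"
  define e2 where "e2 = unit_weight F f2"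
  define u where "u = (\<lambda>f x. if f = f1 then of_bool (x = c) else of_bool (f = f2 \<and> x = d) :: real)"
  define \<mu> where "\<mu> = two_point (weight_space F) e1 e2"
  have r: "valid_report F (colleges I) u \<mu>"
    using valid_wdist_two_point_unit_weight[OF fin f(1,2)]
    by (simp add: valid_report_def u_def \<mu>_def e1_def e2_def)
  have adventurous_gets: "A (misreport I s u \<mu>) s = Some x"
    if rx: "valid_report F (colleges I) ux \<mu>x" "A (misreport I s ux \<mu>x) s = Some x"
      and e: "e \<in> {e1, e2}" "\<And>y. wutil F u e y = of_bool (y = x)" for ux \<mu>x x e
  proof (rule IC_A_assigns_college_preferred_to_all[OF ic I r rx])
    fix y assume "y \<noteq> x"
    have "{w \<in> space (weight_space F). wutil F u w y < wutil F u w x} \<in> sets (weight_space F)"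
      by measurable
    with \<open>y \<noteq> x\<close> e have "measure \<mu> {w \<in> space \<mu>. wutil F u w y < wutil F u w x} \<ge> 1/2"
      unfolding \<mu>_def e1_def e2_def
      by (intro measure_two_point_ge) (auto simp: unit_weight_in_space space_two_point)
    then show "measure \<mu> {w \<in> space \<mu>. wutil F u w y < wutil F u w x} > 0"
      by simp
  qed
  have "wutil F u e1 y = of_bool (y = c)" for y
    using fin f by (simp add: e1_def wutil_unit_weight u_def)
  from adventurous_gets[OF r1 Some _ this] have "A (misreport I s u \<mu>) s = Some c"
    by simp
  moreover have "wutil F u e2 y = of_bool (y = d)" for y
    using fin f by (simp add: e2_def wutil_unit_weight u_def)
  from adventurous_gets[OF r2 d _ this] have "A (misreport I s u \<mu>) s = Some d"
    by simp
  ultimately show ?thesis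
    using Some d by simp
qed

theorem proposition2:
  fixes F :: "'f set"
    and A :: "('s, 'c, 'f) sinst \<Rightarrow> ('s, 'c) matching"
  assumes "finite F" and "card F \<ge> 2"
    and "matching_algorithm F A"
    and "IC_A F A"
  shows "\<forall>I. valid_instance F I \<longrightarrow>
           (\<forall>s\<in>students I. \<forall>u' \<mu>'. valid_report F (colleges I) u' \<mu>' \<longrightarrow>
              A (misreport I s u' \<mu>') s = A I s)"
proof (intro allI impI ballI)
  fix I :: "('s, 'c, 'f) sinst" and s u' \<mu>'
  assume I: "valid_instance F I" "s \<in> students I" and r: "valid_report F (colleges I) u' \<mu>'"
  have "valid_report F (colleges I) (util I s) (wdist I s)"
    using I by (simp add: valid_instance_def)
  from IC_A_outcome_independent_of_report[OF assms(1,2,4) I r this]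
  show "A (misreport I s u' \<mu>') s = A I s"
    by (simp add: misreport_self)
qed

end
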